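(* Let $L$ be a relational language containing infinitely many binary relation symbols and let $\mathbf H$ be a countable $L$-hypergraph (with vertex set $\omega$) universal for all countable $L$-hypergraphs. Then there exist an $L$-hypergraph $\mathbf A$ on three vertices and a colouring $c:\binom{\mathbf H}{\mathbf A}\to\omega$ such that for every tree-like embedding $f:\mathbf H\to\mathbf H$, $c$ attains every value in $\omega$ on the set of embeddings $\mathbf A\to\mathbf H$ whose image lies in $f[\omega]$.
   Context: Convention: every structure is countable, has vertex set some $n\in\omega$ or $\omega$ ordered naturally, embeddings are monotone (order-preserving) embeddings of $L$-structures; $\binom{\mathbf H}{\mathbf A}$ is the set of such embeddings $\mathbf A\to\mathbf H$. An $L$-hypergraph is an $L$-structure in which all relations are injective (no repeated vertices in tuples) and symmetric, and every tuple lies in at most one relation. For $X\subseteq\omega$, $\mathrm{tp}_{\mathbf H}(X)$ is the isomorphism type (respecting the order) of the substructure induced on $X$. An embedding $f:\mathbf H\to\mathbf H$ is tree-like if for every finite $X=\{x_0<\dots<x_m\}\subseteq\omega$, every $0\le i\le m$ and every $x>x_m$ there is $y>x_m$ with $\mathrm{tp}_{\mathbf H}(f[X]\cup\{f(y)\})=\mathrm{tp}_{\mathbf H}(X\cup\{x\})$ and $\mathrm{tp}_{\mathbf H}(\{0,\dots,f(x_0)-1,f(y)\})=\mathrm{tp}_{\mathbf H}(\{0,\dots,f(x_0)-1,f(x_i)\})$. *)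

theory Defs
  imports Main "HOL-Library.Multiset" "HOL-Library.FuncSet"
begin

text \<open>A relational language is a type 'r of relation symbols with an arity function ar.
A countable structure is a pair (V, I): vertex set V, which is some n = {..<n} or
all of nat (omega), and interpretation I R t of each symbol R on tuples t (lists).\<close>

type_synonym 'r struc = "nat set \<times> ('r \<Rightarrow> nat list \<Rightarrow> bool)"

definition wf_struc :: "('r \<Rightarrow> nat) \<Rightarrow> 'r struc \<Rightarrow> bool" where
  "wf_struc ar S \<longleftrightarrow>
     ((\<exists>n. fst S = {..<n}) \<or> fst S = UNIV) \<and>
     (\<forall>R t. snd S R t \<longrightarrow> length t = ar R \<and> set t \<subseteq> fst S)"

definition hypergraph :: "('r \<Rightarrow> nat) \<Rightarrow> 'r struc \<Rightarrow> bool" where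
  "hypergraph ar S \<longleftrightarrow> wf_struc ar S \<and>
     (\<forall>R t. snd S R t \<longrightarrow> distinct t) \<and>
     (\<forall>R t t'. snd S R t \<and> mset t' = mset t \<longrightarrow> snd S R t') \<and>
     (\<forall>R R' t. snd S R t \<and> snd S R' t \<longrightarrow> R = R')"

text \<open>Monotone embeddings A -> B; made extensional (undefined outside the vertex set of A)
so that the set of embeddings is exactly the set of maps on the vertices.\<close>
definition is_emb :: "'r struc \<Rightarrow> 'r struc \<Rightarrow> (nat \<Rightarrow> nat) \<Rightarrow> bool" where
  "is_emb A B e \<longleftrightarrow> e \<in> extensional (fst A) \<and> e ` fst A \<subseteq> fst B \<and>
     strict_mono_on (fst A) e \<and>
     (\<forall>R t. set t \<subseteq> fst A \<longrightarrow> (snd A R t \<longleftrightarrow> snd B R (map e t)))"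

definition universal :: "('r \<Rightarrow> nat) \<Rightarrow> 'r struc \<Rightarrow> bool" where
  "universal ar H \<longleftrightarrow> (\<forall>G. hypergraph ar G \<longrightarrow> (\<exists>e. is_emb G H e))"

text \<open>tp_H(X) = tp_H(Y): there is an order isomorphism X -> Y which is an isomorphism
of the induced substructures.\<close>
definition same_tp :: "('r \<Rightarrow> nat list \<Rightarrow> bool) \<Rightarrow> nat set \<Rightarrow> nat set \<Rightarrow> bool" where
  "same_tp I X Y \<longleftrightarrow> (\<exists>g. bij_betw g X Y \<and> strict_mono_on X g \<and>
     (\<forall>R t. set t \<subseteq> X \<longrightarrow> (I R t \<longleftrightarrow> I R (map g t))))"

definition tree_like :: "('r \<Rightarrow> nat list \<Rightarrow> bool) \<Rightarrow> (nat \<Rightarrow> nat) \<Rightarrow> bool" where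
  "tree_like I f \<longleftrightarrow> is_emb (UNIV, I) (UNIV, I) f \<and>
     (\<forall>X. finite X \<and> X \<noteq> {} \<longrightarrow>
       (\<forall>xi\<in>X. \<forall>x>Max X. \<exists>y>Max X.
          same_tp I (f ` X \<union> {f y}) (X \<union> {x}) \<and>
          same_tp I ({..<f (Min X)} \<union> {f y}) ({..<f (Min X)} \<union> {f xi})))"

end

theory Submission imports Defs begin

text \<open>Enumerate infinitely many binary relation symbols injectively as \<open>R\<^sub>0, R\<^sub>1, \<dots>\<close>
  and colour a triple \<open>a < b < c\<close> of \<open>H\<close> by the \<open>n\<close> such that \<open>R\<^sub>n\<close> joins \<open>c\<close> to the least
  vertex \<open>v\<close> over which \<open>b\<close> and \<open>c\<close> have different binary relations. Given a tree-like \<open>f\<close>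
  and a colour \<open>n\<close>, universality provides \<open>w < p < q < x\<close> in \<open>H\<close> with \<open>R\<^sub>n\<close> on \<open>{w, x}\<close> but
  not on \<open>{w, q}\<close>, and no relations on \<open>{p, q, x}\<close>. Tree-likeness gives a \<open>y\<close> such that
  \<open>f y\<close> has the type of \<open>x\<close> over \<open>f[{w, p, q}]\<close> but the type of \<open>f q\<close> over all vertices
  below \<open>f w\<close>. Hence \<open>f q\<close> and \<open>f y\<close> first split at \<open>f w\<close>, where \<open>R\<^sub>n\<close> meets \<open>f y\<close>, and
  the relation-free triple \<open>(f p, f q, f y)\<close> has colour \<open>n\<close>.\<close>

lemma strict_mono_on_bij_betw_map_sorted:
  fixes g :: "'a::linorder \<Rightarrow> 'b::linorder"
  assumes "bij_betw g (set xs) (set ys)" "strict_mono_on (set xs) g"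
    and "sorted_wrt (<) xs" "sorted_wrt (<) ys"
  shows "map g xs = ys"
proof (rule strict_sorted_equal[OF assms(4)])
  show "sorted_wrt (<) (map g xs)"
    using assms(2,3) by (auto intro: sorted_wrt_map_mono strict_mono_onD)
  show "set (map g xs) = set ys"
    using assms(1) by (simp add: bij_betw_def)
qed

lemma same_tp_sortedE:
  assumes "same_tp I (set xs) (set ys)" "sorted_wrt (<) xs" "sorted_wrt (<) ys"
  obtains g where "map g xs = ys" "\<And>R t. set t \<subseteq> set xs \<Longrightarrow> I R t \<longleftrightarrow> I R (map g t)"
  using assms strict_mono_on_bij_betw_map_sorted unfolding same_tp_def by metis

lemma is_emb_nth_sorted:
  assumes "sorted_wrt (<) vs" "length vs = n"
    and "\<And>R t. set t \<subseteq> {..<n} \<Longrightarrow> J R t \<longleftrightarrow> I R (map ((!) vs) t)"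
  shows "is_emb ({..<n}, J) (UNIV, I) (restrict ((!) vs) {..<n})"
  unfolding is_emb_def fst_conv snd_conv
proof (intro conjI allI impI)
  show "strict_mono_on {..<n} (restrict ((!) vs) {..<n})"
    using assms(1,2) by (auto intro!: strict_mono_onI simp: sorted_wrt_iff_nth_less)
  fix R t assume "set t \<subseteq> {..<n}"
  moreover from this have "map (restrict ((!) vs) {..<n}) t = map ((!) vs) t"
    by (auto intro: map_cong)
  ultimately show "J R t \<longleftrightarrow> I R (map (restrict ((!) vs) {..<n}) t)"
    using assms(3) by metis
qed auto

lemma tree_like_extension:
  assumes "tree_like I f" "w < p" "p < q" "q < x"
  obtains y g where "q < y" "map g [f w, f p, f q, f y] = [w, p, q, x]"
    "\<And>R t. set t \<subseteq> {f w, f p, f q, f y} \<Longrightarrow> I R t \<longleftrightarrow> I R (map g t)"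
    "\<And>R v. v < f w \<Longrightarrow> I R [v, f y] \<longleftrightarrow> I R [v, f q]"
proof -
  have mono: "strict_mono f"
    using assms(1) unfolding tree_like_def is_emb_def by simp
  define X where "X = {w, p, q}"
  have "finite X" "X \<noteq> {}" "Max X = q" "Min X = w" "q \<in> X"
    unfolding X_def using assms(2-4) by auto
  then obtain y where "y > q" and tp_over: "same_tp I (f ` X \<union> {f y}) (X \<union> {x})"
    and tp_below: "same_tp I ({..<f w} \<union> {f y}) ({..<f w} \<union> {f q})"
    using assms(1,4) unfolding tree_like_def by metis
  have fy: "f w < f p" "f p < f q" "f q < f y"
    using assms(2,3) \<open>y > q\<close> mono by (auto dest: strict_monoD)
  obtain g where g: "map g [f w, f p, f q, f y] = [w, p, q, x]"
    "\<And>R t. set t \<subseteq> {f w, f p, f q, f y} \<Longrightarrow> I R t \<longleftrightarrow> I R (map g t)"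
    by (rule same_tp_sortedE[of I "[f w, f p, f q, f y]" "[w, p, q, x]"])
      (use tp_over fy assms(2-4) in \<open>auto simp: X_def insert_commute\<close>)
  obtain h where h: "map h ([0..<f w] @ [f y]) = [0..<f w] @ [f q]"
    "\<And>R t. set t \<subseteq> set ([0..<f w] @ [f y]) \<Longrightarrow> I R t \<longleftrightarrow> I R (map h t)"
    by (rule same_tp_sortedE[of I "[0..<f w] @ [f y]" "[0..<f w] @ [f q]"])
      (use tp_below fy in \<open>auto simp: atLeast0LessThan sorted_wrt_append\<close>)
  have below: "I R [v, f y] \<longleftrightarrow> I R [v, f q]" if "v < f w" for R v
  proof -
    have "h v = v" "h (f y) = f q"
      using h(1) that map_eq_conv[of h "[0..<f w]" id] by auto
    then show ?thesis
      using h(2)[of "[v, f y]" R] that by simp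
  qed
  show thesis
    using that[OF \<open>y > q\<close> g below] by blast
qed

definition nullary_part :: "('r \<Rightarrow> nat list \<Rightarrow> bool) \<Rightarrow> 'r \<Rightarrow> nat list \<Rightarrow> bool" where
  "nullary_part I R t \<longleftrightarrow> t = [] \<and> I R []"

definition add_edge ::
    "'r \<Rightarrow> nat \<Rightarrow> nat \<Rightarrow> ('r \<Rightarrow> nat list \<Rightarrow> bool) \<Rightarrow> 'r \<Rightarrow> nat list \<Rightarrow> bool" where
  "add_edge R a b J R' t \<longleftrightarrow> J R' t \<or> R' = R \<and> mset t = mset [a, b]"

lemma hypergraph_nullary_part:
  assumes "hypergraph ar (V, I)"
  shows "hypergraph ar ({..<n}, nullary_part I)"
proof -
  have "\<forall>R t. I R t \<longrightarrow> length t = ar R" "\<forall>R R' t. I R t \<and> I R' t \<longrightarrow> R = R'"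
    using assms unfolding hypergraph_def wf_struc_def by simp_all
  then show ?thesis
    unfolding hypergraph_def wf_struc_def nullary_part_def by fastforce
qed

lemma hypergraph_add_edge:
  assumes "hypergraph ar (V, J)" "ar R = 2" "a \<noteq> b" "a \<in> V" "b \<in> V"
    and "\<And>R' t. J R' t \<Longrightarrow> mset t \<noteq> mset [a, b]"
  shows "hypergraph ar (V, add_edge R a b J)"
proof -
  have edge: "length t = 2 \<and> set t = {a, b} \<and> distinct t" if "mset t = mset [a, b]" for t
    using that assms(3) mset_eq_imp_distinct_iff[OF that]
    by (metis distinct_length_2_or_more distinct_singleton length_Cons list.size(3)
        numeral_2_eq_2 set_mset_mset size_mset list.set(1,2))
  have J_wf: "\<And>R t. J R t \<Longrightarrow> length t = ar R \<and> set t \<subseteq> V"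
    and J_distinct: "\<And>R t. J R t \<Longrightarrow> distinct t"
    and J_sym: "\<And>R t t'. J R t \<Longrightarrow> mset t' = mset t \<Longrightarrow> J R t'"
    and J_uniq: "\<And>R R' t. J R t \<Longrightarrow> J R' t \<Longrightarrow> R = R'"
    and V: "(\<exists>n. V = {..<n}) \<or> V = UNIV"
    using assms(1) unfolding hypergraph_def wf_struc_def fst_conv snd_conv by blast+
  show ?thesis
    unfolding hypergraph_def wf_struc_def add_edge_def fst_conv snd_conv
  proof (intro conjI allI impI)
    fix R' t assume "J R' t \<or> R' = R \<and> mset t = mset [a, b]"
    then show "length t = ar R'" "set t \<subseteq> V" "distinct t"
      using J_wf J_distinct edge assms(2,4,5) by auto
  next
    fix R' t t' assume "(J R' t \<or> R' = R \<and> mset t = mset [a, b]) \<and> mset t' = mset t"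
    then show "J R' t' \<or> R' = R \<and> mset t' = mset [a, b]"
      using J_sym by auto
  next
    fix R1 R2 t
    assume "(J R1 t \<or> R1 = R \<and> mset t = mset [a, b]) \<and> (J R2 t \<or> R2 = R \<and> mset t = mset [a, b])"
    then show "R1 = R2"
      using J_uniq assms(6) by blast
  qed (use V in auto)
qed

definition first_split :: "('r \<Rightarrow> nat list \<Rightarrow> bool) \<Rightarrow> nat \<Rightarrow> nat \<Rightarrow> nat" where
  "first_split I a b = (LEAST v. \<exists>R. I R [v, a] \<noteq> I R [v, b])"

lemma first_split_eqI:
  assumes "\<And>R v. v < u \<Longrightarrow> I R [v, a] \<longleftrightarrow> I R [v, b]" "I R [u, a] \<noteq> I R [u, b]"
  shows "first_split I a b = u"
  unfolding first_split_def
  by (rule Least_equality) (use assms in \<open>auto simp: not_le[symmetric]\<close>)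

definition split_colour :: "('r \<Rightarrow> nat list \<Rightarrow> bool) \<Rightarrow> (nat \<Rightarrow> 'r) \<Rightarrow> (nat \<Rightarrow> nat) \<Rightarrow> nat" where
  "split_colour I gg e = (SOME k. I (gg k) [first_split I (e 1) (e 2), e 2])"

lemma split_colour_eqI:
  assumes "hypergraph ar (V, I)" "inj gg" "I (gg k) [first_split I (e 1) (e 2), e 2]"
  shows "split_colour I gg e = k"
  unfolding split_colour_def
proof (rule some_equality)
  fix n assume "I (gg n) [first_split I (e 1) (e 2), e 2]"
  then have "gg n = gg k"
    using assms(1,3) unfolding hypergraph_def snd_conv by blast
  then show "n = k"
    using assms(2) by (simp add: inj_eq)
qed (rule assms(3))

lemma is_emb_nullary_part_nth:
  assumes "sorted_wrt (<) vs" "length vs = n" "\<And>R t. set t \<subseteq> set vs \<Longrightarrow> I R t \<Longrightarrow> t = []"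
  shows "is_emb ({..<n}, nullary_part I) (UNIV, I) (restrict ((!) vs) {..<n})"
proof (rule is_emb_nth_sorted[OF assms(1,2)])
  fix R t assume "set t \<subseteq> {..<n}"
  then have "set (map ((!) vs) t) \<subseteq> set vs"
    using assms(2) by (auto intro!: nth_mem)
  then show "nullary_part I R t \<longleftrightarrow> I R (map ((!) vs) t)"
    using assms(3)[of "map ((!) vs) t" R] by (auto simp: nullary_part_def)
qed

lemma universal_obtains_edge_over_nullary_triple:
  assumes "hypergraph ar (UNIV, I)" "universal ar (UNIV, I)" "ar R = 2"
  obtains w p q x where "w < p" "p < q" "q < x" "I R [w, x]" "\<not> I R [w, q]"
    "\<And>R' t. set t \<subseteq> {p, q, x} \<Longrightarrow> I R' t \<Longrightarrow> t = []"
proof -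
  define G where "G = add_edge R 0 3 (nullary_part I)"
  have "hypergraph ar ({..<4}, G)"
    unfolding G_def
    by (rule hypergraph_add_edge[OF hypergraph_nullary_part[OF assms(1)]])
      (auto simp: assms(3) nullary_part_def)
  then obtain E where "is_emb ({..<4}, G) (UNIV, I) E"
    using assms(2) unfolding universal_def by blast
  then have E_mono: "E 0 < E 1" "E 1 < E 2" "E 2 < E 3"
    and E_rel: "\<And>R t. set t \<subseteq> {..<4} \<Longrightarrow> G R t \<longleftrightarrow> I R (map E t)"
    unfolding is_emb_def by (auto intro: strict_mono_onD)
  have "I R [E 0, E 3]" "\<not> I R [E 0, E 2]"
    using E_rel[of "[0, 3]" R] E_rel[of "[0, 2]" R] by (auto simp: G_def add_edge_def nullary_part_def)
  moreover have "t = []" if t: "set t \<subseteq> {E 1, E 2, E 3}" and "I R' t" for R' t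
  proof -
    define s where "s = map (\<lambda>v. if v = E 1 then 1 else if v = E 2 then 2 else 3 :: nat) t"
    have "map E s = t" "0 \<notin> set s" "set s \<subseteq> {..<4}"
      using t E_mono by (auto simp: s_def intro!: map_idI)
    then have "G R' s"
      using E_rel[of s R'] \<open>I R' t\<close> by simp
    moreover have "mset s \<noteq> mset [0, 3]"
      using \<open>0 \<notin> set s\<close> by (metis list.set_intros(1) set_mset_mset)
    ultimately show "t = []"
      using \<open>map E s = t\<close> by (auto simp: G_def add_edge_def nullary_part_def)
  qed
  ultimately show thesis
    using that E_mono by blast
qed

lemma tree_like_attains_split_colour:
  assumes "hypergraph ar (UNIV, I)" "universal ar (UNIV, I)"
    and "inj gg" "ar (gg k) = 2" "tree_like I f"
  shows "\<exists>e. is_emb ({..<3}, nullary_part I) (UNIV, I) e \<and> e ` {..<3} \<subseteq> range f \<and>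
    split_colour I gg e = k"
proof -
  obtain w p q x where wpqx: "w < p" "p < q" "q < x" and edge: "I (gg k) [w, x]"
    and no_edge: "\<not> I (gg k) [w, q]" and nullary: "\<And>R t. set t \<subseteq> {p, q, x} \<Longrightarrow> I R t \<Longrightarrow> t = []"
    using universal_obtains_edge_over_nullary_triple[OF assms(1,2,4)] by blast
  obtain y g where "q < y" and g: "map g [f w, f p, f q, f y] = [w, p, q, x]"
    and g_rel: "\<And>R t. set t \<subseteq> {f w, f p, f q, f y} \<Longrightarrow> I R t \<longleftrightarrow> I R (map g t)"
    and below: "\<And>R v. v < f w \<Longrightarrow> I R [v, f y] \<longleftrightarrow> I R [v, f q]"
    using tree_like_extension[OF assms(5) wpqx] by blast
  have f_mono: "strict_mono f" and f_rel: "\<And>R t. I R t \<longleftrightarrow> I R (map f t)"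
    using assms(5) unfolding tree_like_def is_emb_def by auto
  define vs where "vs = [f p, f q, f y]"
  define e where "e = restrict ((!) vs) {..<3}"
  have "first_split I (f q) (f y) = f w"
  proof (rule first_split_eqI[where R = "gg k"])
    show "I (gg k) [f w, f q] \<noteq> I (gg k) [f w, f y]"
      using no_edge edge f_rel[of "gg k" "[w, q]"] g_rel[of "[f w, f y]" "gg k"] g by auto
  qed (use below in auto)
  then have "split_colour I gg e = k"
    using split_colour_eqI[OF assms(1,3)] edge g_rel[of "[f w, f y]" "gg k"] g
    by (simp add: e_def vs_def)
  moreover have "is_emb ({..<3}, nullary_part I) (UNIV, I) e"
    unfolding e_def
  proof (rule is_emb_nullary_part_nth)
    show "sorted_wrt (<) vs"
      using wpqx \<open>q < y\<close> strict_monoD[OF f_mono] by (simp add: vs_def)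
    fix R t assume t: "set t \<subseteq> set vs" and "I R t"
    then have "I R (map g t)"
      using g_rel[of t R] by (auto simp: vs_def)
    moreover have "set (map g t) \<subseteq> {p, q, x}"
      using t g by (auto simp: vs_def)
    ultimately show "t = []"
      using nullary by blast
  qed (simp add: vs_def)
  moreover have "e ` {..<3} \<subseteq> range f"
    by (auto simp: e_def vs_def less_Suc_eq numeral_3_eq_3)
  ultimately show ?thesis
    by blast
qed

theorem corollary6p3:
  fixes ar :: "'r \<Rightarrow> nat" and I :: "'r \<Rightarrow> nat list \<Rightarrow> bool"
  assumes "infinite {R. ar R = 2}"
    and "hypergraph ar (UNIV, I)"
    and "universal ar (UNIV, I)"
  shows "\<exists>IA (c :: (nat \<Rightarrow> nat) \<Rightarrow> nat). hypergraph ar ({..<3}, IA) \<and>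
    (\<forall>f. tree_like I f \<longrightarrow>
       (\<forall>k::nat. \<exists>e. is_emb ({..<3}, IA) (UNIV, I) e \<and> e ` {..<3} \<subseteq> range f \<and> c e = k))"
proof -
  obtain gg :: "nat \<Rightarrow> 'r" where gg: "inj gg" "range gg \<subseteq> {R. ar R = 2}"
    using assms(1) unfolding infinite_iff_countable_subset by blast
  have "\<exists>e. is_emb ({..<3}, nullary_part I) (UNIV, I) e \<and> e ` {..<3} \<subseteq> range f \<and>
      split_colour I gg e = k" if "tree_like I f" for f k
    using gg that by (intro tree_like_attains_split_colour[OF assms(2,3)]) auto
  then show ?thesis
    using hypergraph_nullary_part[OF assms(2)] by blast
qed

end
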